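(* Let $I_{\mathrm{C}}=\langle p_1,p_2,p_3\rangle$ be the ideal of $\mathbb{Q}[x_1,x_2,x_3,d_1,d_2,d_3,L]$ generated by $p_1,p_2,p_3$, and let $I_{\mathrm{C\_sym}}=I_{\mathrm{C}}\cap \operatorname{Sym}\mathbb{Q}[M,L]$. Then $I_{\mathrm{C\_sym}}$ is finitely generated as an ideal of the ring $\operatorname{Sym}\mathbb{Q}[M,L]$; the seven polynomials $\tilde p_2,\tilde p_3,\tilde p_4,\tilde p_5,\tilde p_6,\tilde p_7,\tilde p_8$ belong to $I_{\mathrm{C\_sym}}$ and generate it as an ideal of $\operatorname{Sym}\mathbb{Q}[M,L]$.
   Context: Work in the polynomial ring $\mathbb{Q}[M,L]=\mathbb{Q}[x_1,x_2,x_3,d_1,d_2,d_3,L]$. Define $p_1=x_2^2+x_3^2-d_1^2$, $p_2=x_3^2+x_1^2-d_2^2$, $p_3=x_1^2+x_2^2-d_3^2$. The symmetric group $S_3$ acts on this ring by $\sigma(x_i)=x_{\sigma(i)}$, $\sigma(d_i)=d_{\sigma(i)}$, $\sigma(L)=L$ (i.e. by simultaneously permuting the columns of the matrix $M=\begin{pmatrix}x_1&x_2&x_3\\ d_1&d_2&d_3\end{pmatrix}$). $\operatorname{Sym}\mathbb{Q}[M,L]$ denotes the subring of polynomials invariant under this action (multisymmetric polynomials). Define $\tilde p_2=p_1+p_2+p_3$, $\tilde p_3=d_1p_1+d_2p_2+d_3p_3$, $\tilde p_4=x_1p_1+x_2p_2+x_3p_3$, $\tilde p_5=x_1d_1p_1+x_2d_2p_2+x_3d_3p_3$,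 $\tilde p_6=x_1^2p_1+x_2^2p_2+x_3^2p_3$, $\tilde p_7=d_1^2p_1+d_2^2p_2+d_3^2p_3$, $\tilde p_8=x_1^2d_1^2p_1+x_2^2d_2^2p_2+x_3^2d_3^2p_3$. *)

theory Defs
  imports Complex_Main "HOL-Library.Poly_Mapping"
begin

text \<open>Column indices 1,2,3 of the matrix M.\<close>
datatype idx = I1 | I2 | I3

datatype var = X idx | D idx | Lv

text \<open>The polynomial ring Q[x1,x2,x3,d1,d2,d3,L]: finitely supported maps from
  monomials (exponent vectors var =>0 nat) to rational coefficients, with the
  convolution product of HOL-Library.Poly_Mapping.\<close>
type_synonym qpoly = "(var \<Rightarrow>\<^sub>0 nat) \<Rightarrow>\<^sub>0 rat"

definition Var :: "var \<Rightarrow> qpoly" where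
  "Var v = Poly_Mapping.single (Poly_Mapping.single v 1) 1"

abbreviation x :: "idx \<Rightarrow> qpoly" where "x i \<equiv> Var (X i)"
abbreviation d :: "idx \<Rightarrow> qpoly" where "d i \<equiv> Var (D i)"

fun var_perm :: "(idx \<Rightarrow> idx) \<Rightarrow> var \<Rightarrow> var" where
  "var_perm \<sigma> (X i) = X (\<sigma> i)"
| "var_perm \<sigma> (D i) = D (\<sigma> i)"
| "var_perm \<sigma> Lv = Lv"

text \<open>Induced ring automorphism: the coefficient of monomial n in sigma(p) is the
  coefficient of monomial (n o var_perm sigma) in p; hence sigma(x_i) = x_(sigma i),
  sigma(d_i) = d_(sigma i), sigma(L) = L.\<close>
definition poly_perm :: "(idx \<Rightarrow> idx) \<Rightarrow> qpoly \<Rightarrow> qpoly" where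
  "poly_perm \<sigma> p = Poly_Mapping.map_key (\<lambda>n. Poly_Mapping.map_key (var_perm \<sigma>) n) p"

definition SymQ :: "qpoly set" where
  "SymQ = {p. \<forall>\<sigma>. bij \<sigma> \<longrightarrow> poly_perm \<sigma> p = p}"

definition ideal_gen_in :: "'a::comm_ring_1 set \<Rightarrow> 'a list \<Rightarrow> 'a set" where
  "ideal_gen_in S gs = {(\<Sum>j<length gs. c j * gs ! j) | c. \<forall>j<length gs. c j \<in> S}"

definition p1 :: qpoly where "p1 = x I2 ^ 2 + x I3 ^ 2 - d I1 ^ 2"
definition p2 :: qpoly where "p2 = x I3 ^ 2 + x I1 ^ 2 - d I2 ^ 2"
definition p3 :: qpoly where "p3 = x I1 ^ 2 + x I2 ^ 2 - d I3 ^ 2"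

definition I_C :: "qpoly set" where
  "I_C = ideal_gen_in UNIV [p1, p2, p3]"

definition I_C_sym :: "qpoly set" where
  "I_C_sym = I_C \<inter> SymQ"

definition pt2 :: qpoly where "pt2 = p1 + p2 + p3"
definition pt3 :: qpoly where "pt3 = d I1 * p1 + d I2 * p2 + d I3 * p3"
definition pt4 :: qpoly where "pt4 = x I1 * p1 + x I2 * p2 + x I3 * p3"
definition pt5 :: qpoly where
  "pt5 = x I1 * d I1 * p1 + x I2 * d I2 * p2 + x I3 * d I3 * p3"
definition pt6 :: qpoly where
  "pt6 = x I1 ^ 2 * p1 + x I2 ^ 2 * p2 + x I3 ^ 2 * p3"
definition pt7 :: qpoly where
  "pt7 = d I1 ^ 2 * p1 + d I2 ^ 2 * p2 + d I3 ^ 2 * p3"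
definition pt8 :: qpoly where
  "pt8 = x I1 ^ 2 * d I1 ^ 2 * p1 + x I2 ^ 2 * d I2 ^ 2 * p2 + x I3 ^ 2 * d I3 ^ 2 * p3"

end

theory Submission
  imports Defs
begin

(* The seven generators pt2, ..., pt8 are weighted power sums F a b = sum_j x_j^a d_j^b p_j,
   and F a b = E 2 0 * E a b - E (a+2) b - E a (b+2) in terms of the multisymmetric power sums
   E a b = sum_j x_j^a d_j^b.  Hence they are symmetric and lie in I_C, which gives the easy
   inclusion J <= I_C_sym for the ideal J that they generate in Sym Q[M,L].

   Conversely, a symmetric f = c1 p1 + c2 p2 + c3 p3 satisfies 6 f = R f = sum_j R (c_j p_j),
   where R is the orbit sum over S_3 (six times the Reynolds operator).  R is linear over the
   symmetric polynomials and every monomial is a power of L times one monomial x_j^a d_j^b from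
   each column, so it suffices to show R (m1 m2 m3 p_j) in J.  The classical formula for the
   orbit sum of a product of three column functions writes this as a combination of F's with
   symmetric coefficients.  Finally every F a b lies in J: weighted Newton identities lower
   exponents >= 3, and two explicit identities handle F 2 1 and F 1 2. *)

section \<open>Relabelling the keys of a monoid algebra\<close>

lemma poly_mapping_add_induct [case_names zero single plus]:
  fixes f :: "'a \<Rightarrow>\<^sub>0 'b::comm_monoid_add"
  assumes "P 0" "\<And>k v. P (Poly_Mapping.single k v)" "\<And>f g. P f \<Longrightarrow> P g \<Longrightarrow> P (f + g)"
  shows "P f"
proof (induct f rule: update_induct)
  case const
  show ?case by fact
next
  case (update f a b)
  have "Poly_Mapping.update a b f = f + Poly_Mapping.single a b"
    using update(1)
    by (intro poly_mapping_eqI) (auto simp: lookup_update lookup_add lookup_single when_def in_keys_iff)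
  then show ?case using assms update by simp
qed

lemma bij_map_key:
  assumes "bij f"
  shows "bij (Poly_Mapping.map_key f :: ('a \<Rightarrow>\<^sub>0 'c::zero) \<Rightarrow> ('b \<Rightarrow>\<^sub>0 'c))"
proof (rule bij_betw_byWitness[where f' = "Poly_Mapping.map_key (inv f)"])
  have inj: "inj f" "inj (inv f)"
    using assms bij_imp_bij_inv bij_is_inj by auto
  have "inv f \<circ> f = id"
    using assms by (simp add: bij_is_inj)
  moreover have "f \<circ> inv f = id"
    using assms by (simp add: bij_is_surj surj_iff[symmetric])
  ultimately show "\<forall>p\<in>UNIV. Poly_Mapping.map_key (inv f) (Poly_Mapping.map_key f p) = p"
    "\<forall>p\<in>UNIV. Poly_Mapping.map_key f (Poly_Mapping.map_key (inv f) p) = p"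
    using inj by (simp_all add: map_key_compose map_key_id[folded id_def])
qed simp_all

lemma map_key_single_bij:
  "bij h \<Longrightarrow> Poly_Mapping.map_key h (Poly_Mapping.single k v) = Poly_Mapping.single (inv h k) v"
  by (metis bij_is_inj bij_is_surj map_key_single surj_f_inv_f)

lemma map_key_mult:
  fixes h :: "'k::monoid_add \<Rightarrow> 'k" and p q :: "'k \<Rightarrow>\<^sub>0 'b::semiring_0"
  assumes bij: "bij h" and hom: "\<And>a b. h (a + b) = h a + h b"
  shows "Poly_Mapping.map_key h (p * q) = Poly_Mapping.map_key h p * Poly_Mapping.map_key h q"
proof -
  have inj: "inj h" using bij bij_is_inj by blast
  have inv_hom: "inv h (a + b) = inv h a + inv h b" for a b
  proof (rule inv_f_eq[OF inj])
    show "h (inv h a + inv h b) = a + b"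
      using bij by (simp add: hom bij_is_surj surj_f_inv_f)
  qed
  show ?thesis
  proof (induct p rule: poly_mapping_add_induct)
    case (single k v)
    show ?case
    proof (induct q rule: poly_mapping_add_induct)
      case (single l w)
      show ?case by (simp add: mult_single map_key_single_bij[OF bij] inv_hom)
    qed (simp_all add: inj map_key_plus distrib_left)
  qed (simp_all add: inj map_key_plus distrib_right)
qed

lemma bij_var_perm:
  assumes "bij \<sigma>"
  shows "bij (var_perm \<sigma>)"
proof (rule bij_betw_byWitness[where f' = "var_perm (inv \<sigma>)"])
  have "inv \<sigma> (\<sigma> i) = i" "\<sigma> (inv \<sigma> i) = i" for i
    using assms by (simp_all add: bij_is_inj bij_is_surj surj_f_inv_f)
  then have "var_perm (inv \<sigma>) (var_perm \<sigma> v) = v" "var_perm \<sigma> (var_perm (inv \<sigma>) v) = v" for v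
    by (cases v; simp)+
  then show "\<forall>v\<in>UNIV. var_perm (inv \<sigma>) (var_perm \<sigma> v) = v"
    "\<forall>v\<in>UNIV. var_perm \<sigma> (var_perm (inv \<sigma>) v) = v"
    by simp_all
qed simp_all

abbreviation expo_perm :: "(idx \<Rightarrow> idx) \<Rightarrow> (var \<Rightarrow>\<^sub>0 nat) \<Rightarrow> (var \<Rightarrow>\<^sub>0 nat)" where
  "expo_perm \<sigma> \<equiv> Poly_Mapping.map_key (var_perm \<sigma>)"

lemma bij_expo_perm: "bij \<sigma> \<Longrightarrow> bij (expo_perm \<sigma>)"
  by (intro bij_map_key bij_var_perm)

lemma expo_perm_add: "bij \<sigma> \<Longrightarrow> expo_perm \<sigma> (m + n) = expo_perm \<sigma> m + expo_perm \<sigma> n"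
  by (intro map_key_plus bij_is_inj bij_var_perm)

lemma poly_perm_add: "bij \<sigma> \<Longrightarrow> poly_perm \<sigma> (p + q) = poly_perm \<sigma> p + poly_perm \<sigma> q"
  unfolding poly_perm_def by (intro map_key_plus bij_is_inj bij_expo_perm)

lemma poly_perm_diff: "bij \<sigma> \<Longrightarrow> poly_perm \<sigma> (p - q) = poly_perm \<sigma> p - poly_perm \<sigma> q"
  by (rule additive.diff) (unfold_locales, rule poly_perm_add)

lemma poly_perm_mult: "bij \<sigma> \<Longrightarrow> poly_perm \<sigma> (p * q) = poly_perm \<sigma> p * poly_perm \<sigma> q"
  unfolding poly_perm_def by (intro map_key_mult bij_expo_perm expo_perm_add)

text \<open>Constants are fixed: the zero exponent vector is fixed by every relabelling.\<close>
lemma poly_perm_const: "bij \<sigma> \<Longrightarrow> poly_perm \<sigma> (Poly_Mapping.single 0 c) = Poly_Mapping.single 0 c"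
proof -
  assume bij: "bij \<sigma>"
  have "inv (expo_perm \<sigma>) 0 = 0"
    using bij by (intro inv_f_eq) (simp_all add: bij_is_inj bij_expo_perm bij_var_perm)
  then show ?thesis
    using bij by (simp add: poly_perm_def map_key_single_bij bij_expo_perm)
qed

lemma poly_perm_one: "bij \<sigma> \<Longrightarrow> poly_perm \<sigma> 1 = 1"
  using poly_perm_const[of \<sigma> 1] by simp

lemma poly_perm_power: "bij \<sigma> \<Longrightarrow> poly_perm \<sigma> (p ^ n) = poly_perm \<sigma> p ^ n"
  by (induct n) (simp_all add: poly_perm_one poly_perm_mult)

lemma poly_perm_Var: "bij \<sigma> \<Longrightarrow> poly_perm \<sigma> (Var v) = Var (var_perm \<sigma> v)"
proof -
  assume bij: "bij \<sigma>"
  have "expo_perm \<sigma> (Poly_Mapping.single (var_perm \<sigma> v) 1) = Poly_Mapping.single v 1"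
    using bij by (simp add: bij_is_inj bij_var_perm)
  then have "inv (expo_perm \<sigma>) (Poly_Mapping.single v 1) = Poly_Mapping.single (var_perm \<sigma> v) 1"
    using bij by (simp add: inv_f_eq bij_is_inj bij_expo_perm)
  then show ?thesis
    using bij by (simp add: poly_perm_def Var_def map_key_single_bij bij_expo_perm)
qed

section \<open>Ideals generated inside a subring\<close>

definition subring :: "'a::comm_ring_1 set \<Rightarrow> bool" where
  "subring S \<longleftrightarrow> 1 \<in> S \<and> (\<forall>a\<in>S. \<forall>b\<in>S. a - b \<in> S \<and> a * b \<in> S)"

lemma subring_UNIV: "subring UNIV"
  by (simp add: subring_def)

lemma subring_zero: "subring S \<Longrightarrow> 0 \<in> S"
  unfolding subring_def by (metis diff_self)

lemma subring_closed:
  assumes "subring S" "a \<in> S" "b \<in> S"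
  shows "a + b \<in> S" "a - b \<in> S" "a * b \<in> S"
proof -
  show "a - b \<in> S" "a * b \<in> S" using assms by (simp_all add: subring_def)
  have "0 - b \<in> S" using assms subring_zero[OF assms(1)] by (simp only: subring_def)
  then have "a - (0 - b) \<in> S" using assms(1,2) by (simp only: subring_def)
  then show "a + b \<in> S" by simp
qed

lemma ideal_gen_inE:
  assumes "f \<in> ideal_gen_in S gs"
  obtains c where "\<forall>j<length gs. c j \<in> S" "f = (\<Sum>j<length gs. c j * gs ! j)"
  using assms unfolding ideal_gen_in_def by blast

lemma ideal_gen_inI:
  "\<forall>j<length gs. c j \<in> S \<Longrightarrow> (\<Sum>j<length gs. c j * gs ! j) \<in> ideal_gen_in S gs"
  unfolding ideal_gen_in_def by blast

lemma ideal_gen_in_zero: "subring S \<Longrightarrow> 0 \<in> ideal_gen_in S gs"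
  using ideal_gen_inI[of gs "\<lambda>_. 0" S] by (simp add: subring_zero)

lemma ideal_gen_in_add:
  assumes S: "subring S" and "f \<in> ideal_gen_in S gs" "g \<in> ideal_gen_in S gs"
  shows "f + g \<in> ideal_gen_in S gs"
proof -
  obtain c where c: "\<forall>j<length gs. c j \<in> S" "f = (\<Sum>j<length gs. c j * gs ! j)"
    using assms(2) by (rule ideal_gen_inE)
  obtain c' where c': "\<forall>j<length gs. c' j \<in> S" "g = (\<Sum>j<length gs. c' j * gs ! j)"
    using assms(3) by (rule ideal_gen_inE)
  have "f + g = (\<Sum>j<length gs. (c j + c' j) * gs ! j)"
    by (simp add: c c' sum.distrib distrib_right)
  also have "\<dots> \<in> ideal_gen_in S gs"
    using c c' subring_closed[OF S] by (intro ideal_gen_inI) blast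
  finally show ?thesis .
qed

lemma ideal_gen_in_mult:
  assumes S: "subring S" and "s \<in> S" "f \<in> ideal_gen_in S gs"
  shows "s * f \<in> ideal_gen_in S gs"
proof -
  obtain c where c: "\<forall>j<length gs. c j \<in> S" "f = (\<Sum>j<length gs. c j * gs ! j)"
    using assms(3) by (rule ideal_gen_inE)
  have "s * f = (\<Sum>j<length gs. (s * c j) * gs ! j)"
    by (simp add: c sum_distrib_left mult.assoc)
  also have "\<dots> \<in> ideal_gen_in S gs"
    using c \<open>s \<in> S\<close> subring_closed[OF S] by (intro ideal_gen_inI) blast
  finally show ?thesis .
qed

lemma ideal_gen_in_diff:
  assumes S: "subring S" and "f \<in> ideal_gen_in S gs" "g \<in> ideal_gen_in S gs"
  shows "f - g \<in> ideal_gen_in S gs"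
proof -
  have "0 - 1 \<in> S" using S subring_zero[OF S] by (simp only: subring_def)
  then have "(0 - 1) * g \<in> ideal_gen_in S gs" using S assms(3) by (intro ideal_gen_in_mult)
  then have "f + (0 - 1) * g \<in> ideal_gen_in S gs" using S assms(2) by (intro ideal_gen_in_add)
  then show ?thesis by simp
qed

lemma ideal_gen_in_gen:
  assumes S: "subring S" and "g \<in> set gs"
  shows "g \<in> ideal_gen_in S gs"
proof -
  obtain i where i: "i < length gs" "g = gs ! i"
    using assms(2) by (metis in_set_conv_nth)
  have "(\<Sum>j<length gs. (if j = i then 1 else 0) * gs ! j) \<in> ideal_gen_in S gs"
    using S subring_zero[OF S] by (intro ideal_gen_inI) (simp add: subring_def)
  then show ?thesis using i by (simp add: if_distrib[of "\<lambda>c. c * _"] cong: if_cong)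
qed

lemma ideal_gen_in_least:
  assumes "0 \<in> I" "\<And>a b. a \<in> I \<Longrightarrow> b \<in> I \<Longrightarrow> a + b \<in> I"
    "\<And>s a. s \<in> S \<Longrightarrow> a \<in> I \<Longrightarrow> s * a \<in> I" "set gs \<subseteq> I"
  shows "ideal_gen_in S gs \<subseteq> I"
proof
  fix f assume "f \<in> ideal_gen_in S gs"
  then obtain c where c: "\<forall>j<length gs. c j \<in> S" "f = (\<Sum>j<length gs. c j * gs ! j)"
    by (rule ideal_gen_inE)
  have "n \<le> length gs \<Longrightarrow> (\<Sum>j<n. c j * gs ! j) \<in> I" for n
  proof (induct n)
    case (Suc n)
    have IH: "(\<Sum>j<n. c j * gs ! j) \<in> I" using Suc by simp
    have "c n \<in> S" using Suc.prems c(1) by simp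
    moreover have "gs ! n \<in> set gs" using Suc.prems by simp
    then have "gs ! n \<in> I" using assms(4) by blast
    ultimately have "c n * gs ! n \<in> I" by (rule assms(3))
    with IH have "(\<Sum>j<n. c j * gs ! j) + c n * gs ! n \<in> I" by (rule assms(2))
    then show ?case by simp
  qed (simp add: assms(1))
  then show "f \<in> I" using c by simp
qed

lemma ideal_gen_in_3E:
  assumes "f \<in> ideal_gen_in S [a, b, c]"
  obtains c1 c2 c3 where "c1 \<in> S" "c2 \<in> S" "c3 \<in> S" "f = c1 * a + c2 * b + c3 * c"
proof -
  obtain k where k: "\<forall>j<length [a, b, c]. k j \<in> S" "f = (\<Sum>j<length [a, b, c]. k j * [a, b, c] ! j)"
    using assms by (rule ideal_gen_inE)
  have "k 0 \<in> S" "k 1 \<in> S" "k 2 \<in> S" using k(1) by simp_all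
  moreover have "f = k 0 * a + k 1 * b + k 2 * c"
    using k(2) by (simp add: eval_nat_numeral lessThan_Suc add.assoc)
  ultimately show ?thesis by (rule that)
qed

section \<open>Multisymmetric polynomials\<close>

lemma SymQ_I: "(\<And>\<sigma>. bij \<sigma> \<Longrightarrow> poly_perm \<sigma> p = p) \<Longrightarrow> p \<in> SymQ"
  unfolding SymQ_def by auto

lemma SymQ_D: "p \<in> SymQ \<Longrightarrow> bij \<sigma> \<Longrightarrow> poly_perm \<sigma> p = p"
  unfolding SymQ_def by auto

lemma subring_SymQ: "subring SymQ"
proof -
  have "1 \<in> SymQ" by (rule SymQ_I) (rule poly_perm_one)
  moreover have "p - q \<in> SymQ" "p * q \<in> SymQ" if "p \<in> SymQ" "q \<in> SymQ" for p q
    using that by (auto intro!: SymQ_I simp: SymQ_D poly_perm_diff poly_perm_mult)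
  ultimately show ?thesis unfolding subring_def by blast
qed

lemma sym_const: "Poly_Mapping.single 0 c \<in> SymQ"
  by (rule SymQ_I) (rule poly_perm_const)

lemma sym_numeral: "numeral n \<in> SymQ"
  using sym_const[of "numeral n"] by simp

lemma sym_power: "p \<in> SymQ \<Longrightarrow> p ^ n \<in> SymQ"
  by (rule SymQ_I) (simp add: poly_perm_power SymQ_D)

lemma sym_L: "Var Lv \<in> SymQ"
  by (rule SymQ_I) (simp add: poly_perm_Var)

lemmas sym_closed = subring_closed[OF subring_SymQ] sym_numeral sym_power

definition S3 :: "(idx \<Rightarrow> 'a::comm_monoid_add) \<Rightarrow> 'a" where
  "S3 h = h I1 + h I2 + h I3"

lemma S3_reindex:
  assumes "bij \<sigma>"
  shows "S3 (\<lambda>j. h (\<sigma> j)) = S3 h"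
proof -
  have UNIV_idx: "(UNIV :: idx set) = {I1, I2, I3}"
    using idx.exhaust by auto
  have S3_sum: "S3 g = sum g UNIV" for g :: "idx \<Rightarrow> 'a"
    by (simp add: S3_def UNIV_idx add.assoc)
  have "S3 (\<lambda>j. h (\<sigma> j)) = sum (\<lambda>j. h (\<sigma> j)) UNIV" by (rule S3_sum)
  also have "\<dots> = sum h UNIV"
    using assms by (intro sum.reindex_bij_betw) (simp add: bij_betw_def)
  also have "\<dots> = S3 h" by (rule S3_sum[symmetric])
  finally show ?thesis .
qed

definition col :: "nat \<Rightarrow> nat \<Rightarrow> idx \<Rightarrow> qpoly" where
  "col a b j = x j ^ a * d j ^ b"

lemma col_mult: "col a b j * col a' b' j = col (a + a') (b + b') j"
  by (simp add: col_def power_add mult_ac)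

lemma poly_perm_col: "bij \<sigma> \<Longrightarrow> poly_perm \<sigma> (col a b j) = col a b (\<sigma> j)"
  by (simp add: col_def poly_perm_mult poly_perm_power poly_perm_Var)

definition E :: "nat \<Rightarrow> nat \<Rightarrow> qpoly" where
  "E a b = S3 (col a b)"

lemma sym_E: "E a b \<in> SymQ"
proof (rule SymQ_I)
  fix \<sigma> :: "idx \<Rightarrow> idx" assume "bij \<sigma>"
  then have "poly_perm \<sigma> (E a b) = S3 (\<lambda>j. col a b (\<sigma> j))"
    by (simp add: E_def S3_def poly_perm_add poly_perm_col)
  also have "\<dots> = E a b"
    using \<open>bij \<sigma>\<close> by (simp add: S3_reindex E_def)
  finally show "poly_perm \<sigma> (E a b) = E a b" .
qed

fun pj :: "idx \<Rightarrow> qpoly" where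
  "pj I1 = p1" | "pj I2 = p2" | "pj I3 = p3"

lemma pj_eq: "pj j = E 2 0 - x j ^ 2 - d j ^ 2"
  by (cases j) (simp_all add: E_def S3_def col_def p1_def p2_def p3_def)

lemma poly_perm_pj: "bij \<sigma> \<Longrightarrow> poly_perm \<sigma> (pj j) = pj (\<sigma> j)"
  by (simp add: pj_eq poly_perm_diff poly_perm_power poly_perm_Var SymQ_D[OF sym_E])

definition F :: "nat \<Rightarrow> nat \<Rightarrow> qpoly" where
  "F a b = S3 (\<lambda>j. col a b j * pj j)"

lemma F_E: "F a b = E 2 0 * E a b - E (a + 2) b - E a (b + 2)"
  by (simp add: F_def E_def S3_def pj_eq col_def power_add power2_eq_square algebra_simps)

lemma sym_F: "F a b \<in> SymQ"
  unfolding F_E by (intro sym_closed sym_E)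

lemma pts_F: "[pt2, pt3, pt4, pt5, pt6, pt7, pt8] = [F 0 0, F 0 1, F 1 0, F 1 1, F 2 0, F 0 2, F 2 2]"
  by (simp add: F_def S3_def col_def pt2_def pt3_def pt4_def pt5_def pt6_def pt7_def pt8_def)

abbreviation gens :: "qpoly list" where
  "gens \<equiv> [pt2, pt3, pt4, pt5, pt6, pt7, pt8]"

abbreviation J :: "qpoly set" where
  "J \<equiv> ideal_gen_in SymQ gens"

lemmas J_closed =
  ideal_gen_in_add[OF subring_SymQ] ideal_gen_in_diff[OF subring_SymQ]
  ideal_gen_in_mult[OF subring_SymQ]

lemma F_gens_in_J: "F 0 0 \<in> J" "F 0 1 \<in> J" "F 1 0 \<in> J" "F 1 1 \<in> J" "F 2 0 \<in> J" "F 0 2 \<in> J" "F 2 2 \<in> J"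
  by (simp_all only: pts_F ideal_gen_in_gen[OF subring_SymQ] list.set insert_iff simp_thms)

text \<open>J is a Q-vector space, so the factors 6 produced by the symmetrizations below can be
  cancelled.\<close>
lemma J_cancel_6: "6 * f \<in> J \<Longrightarrow> f \<in> J"
proof -
  assume "6 * f \<in> J"
  then have "Poly_Mapping.single 0 (1 / 6) * (6 * f) \<in> J"
    by (rule ideal_gen_in_mult[OF subring_SymQ sym_const])
  moreover have "Poly_Mapping.single 0 (1 / 6) * (6 :: qpoly) = 1"
    by (simp add: mult_single flip: single_numeral)
  ultimately show "f \<in> J"
    by (simp add: mult.assoc[symmetric])
qed

section \<open>All weighted power sums F a b lie in J\<close>

text \<open>Newton's identity in three variables, with weights: a weighted third power sum is a
  combination of lower weighted power sums with symmetric coefficients.\<close>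
lemma newton_S3:
  fixes y z :: "idx \<Rightarrow> 'a::comm_ring_1"
  shows "6 * S3 (\<lambda>j. y j * z j ^ 3) =
    6 * S3 z * S3 (\<lambda>j. y j * z j ^ 2) - 3 * (S3 z ^ 2 - S3 (\<lambda>j. z j ^ 2)) * S3 (\<lambda>j. y j * z j)
    + (S3 z ^ 3 - 3 * S3 z * S3 (\<lambda>j. z j ^ 2) + 2 * S3 (\<lambda>j. z j ^ 3)) * S3 y"
  by (simp add: S3_def algebra_simps power2_eq_square power3_eq_cube)

lemma F_shift_x: "F (a + k) b = S3 (\<lambda>j. (col a b j * pj j) * x j ^ k)"
  by (simp add: F_def col_def power_add mult_ac)

lemma F_shift_d: "F a (b + k) = S3 (\<lambda>j. (col a b j * pj j) * d j ^ k)"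
  by (simp add: F_def col_def power_add mult_ac)

lemma E_x: "E k 0 = S3 (\<lambda>j. x j ^ k)" and E_d: "E 0 k = S3 (\<lambda>j. d j ^ k)"
  by (simp_all add: E_def S3_def col_def)

lemma F_rec_x:
  "6 * F (a + 3) b = 6 * E 1 0 * F (a + 2) b - 3 * (E 1 0 ^ 2 - E 2 0) * F (a + 1) b
     + (E 1 0 ^ 3 - 3 * E 1 0 * E 2 0 + 2 * E 3 0) * F a b"
  using newton_S3[of "\<lambda>j. col a b j * pj j" x]
  unfolding F_shift_x E_x F_shift_x[of a 1 b, simplified] E_x[of 1, simplified]
  by (simp add: F_def)

lemma F_rec_d:
  "6 * F a (b + 3) = 6 * E 0 1 * F a (b + 2) - 3 * (E 0 1 ^ 2 - E 0 2) * F a (b + 1)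
     + (E 0 1 ^ 3 - 3 * E 0 1 * E 0 2 + 2 * E 0 3) * F a b"
  using newton_S3[of "\<lambda>j. col a b j * pj j" d]
  unfolding F_shift_d E_d F_shift_d[of a b 1, simplified] E_d[of 1, simplified]
  by (simp add: F_def)

lemma F_21:
  "6 * F 2 1 = (2 * E 2 1 - 2 * E 1 0 * E 1 1 - E 0 1 * E 2 0 + E 0 1 * E 1 0 ^ 2) * F 0 0
     + (E 2 0 - E 1 0 ^ 2) * F 0 1 + (2 * E 1 1 - 2 * E 0 1 * E 1 0) * F 1 0
     + 4 * E 1 0 * F 1 1 + 2 * E 0 1 * F 2 0"
  by (simp add: F_def E_def S3_def col_def p1_def p2_def p3_def algebra_simps
      power2_eq_square power3_eq_cube)

lemma F_12:
  "6 * F 1 2 = (E 3 0 + 3 * E 1 2 - E 1 0 * E 2 0 - E 0 2 * E 1 0 - 2 * E 0 1 * E 1 1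
       + E 0 1 ^ 2 * E 1 0) * F 0 0
     + (2 * E 1 1 - 2 * E 0 1 * E 1 0) * F 0 1 + (2 * E 2 0 - E 0 1 ^ 2) * F 1 0
     + 4 * E 0 1 * F 1 1 + 2 * E 1 0 * F 0 2"
  by (simp add: F_def E_def S3_def col_def p1_def p2_def p3_def algebra_simps
      power2_eq_square power3_eq_cube)

lemma nat_induct3:
  fixes n :: nat
  assumes "P 0" "P 1" "P 2" "\<And>n. P n \<Longrightarrow> P (n + 1) \<Longrightarrow> P (n + 2) \<Longrightarrow> P (n + 3)"
  shows "P n"
proof (induct n rule: less_induct)
  case (less n)
  show ?case
  proof (cases "n < 3")
    case True
    then have "n = 0 \<or> n = 1 \<or> n = 2" by auto
    then show ?thesis using assms(1-3) by auto
  next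
    case False
    then obtain m where "n = m + 3" by (metis add.commute le_Suc_ex not_less)
    then show ?thesis using assms(4)[of m] less[of m] less[of "m + 1"] less[of "m + 2"] by simp
  qed
qed

lemmas J_intros = J_closed sym_closed sym_E

lemma F_in_J_from_d012:
  assumes "F a 0 \<in> J" "F a 1 \<in> J" "F a 2 \<in> J"
  shows "F a b \<in> J"
proof (induct b rule: nat_induct3)
  case (4 n)
  have "6 * F a (n + 3) \<in> J"
    unfolding F_rec_d by (intro J_intros 4)
  then show ?case by (rule J_cancel_6)
qed (use assms in simp_all)

text \<open>Every F a b lies in J: the exponents 0..2 are covered by the generators and F_21,
  F_12, all others by the recurrences.\<close>
lemma F_in_J: "F a b \<in> J"
proof (induct a arbitrary: b rule: nat_induct3)
  case 1
  show ?case by (rule F_in_J_from_d012) (use F_gens_in_J in simp_all)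
next
  case 2
  have "6 * F 1 2 \<in> J"
    unfolding F_12 by (intro J_intros) (use F_gens_in_J in simp_all)
  then have F12: "F 1 2 \<in> J" by (rule J_cancel_6)
  show ?case by (rule F_in_J_from_d012) (use F_gens_in_J F12 in simp_all)
next
  case 3
  have "6 * F 2 1 \<in> J"
    unfolding F_21 by (intro J_intros) (use F_gens_in_J in simp_all)
  then have F21: "F 2 1 \<in> J" by (rule J_cancel_6)
  show ?case by (rule F_in_J_from_d012) (use F_gens_in_J F21 in simp_all)
next
  case (4 n)
  have "6 * F (n + 3) b \<in> J"
    unfolding F_rec_x by (intro J_intros 4)
  then show ?case by (rule J_cancel_6)
qed

section \<open>The Reynolds operator of S_3\<close>

fun tr12 :: "idx \<Rightarrow> idx" where "tr12 I1 = I2" | "tr12 I2 = I1" | "tr12 I3 = I3"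
fun tr13 :: "idx \<Rightarrow> idx" where "tr13 I1 = I3" | "tr13 I2 = I2" | "tr13 I3 = I1"
fun tr23 :: "idx \<Rightarrow> idx" where "tr23 I1 = I1" | "tr23 I2 = I3" | "tr23 I3 = I2"
fun cyc :: "idx \<Rightarrow> idx" where "cyc I1 = I2" | "cyc I2 = I3" | "cyc I3 = I1"
fun cyc2 :: "idx \<Rightarrow> idx" where "cyc2 I1 = I3" | "cyc2 I2 = I1" | "cyc2 I3 = I2"

definition S3_perms :: "(idx \<Rightarrow> idx) list" where
  "S3_perms = [id, tr12, tr13, tr23, cyc, cyc2]"

lemma all_idx: "(\<forall>i. P i) \<longleftrightarrow> P I1 \<and> P I2 \<and> P I3"
  by (metis idx.exhaust)

lemma bij_S3_perms: "\<sigma> \<in> set S3_perms \<Longrightarrow> bij \<sigma>"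
proof -
  have "bij tr12" by (rule o_bij[of tr12]) (simp_all add: fun_eq_iff all_idx)
  moreover have "bij tr13" by (rule o_bij[of tr13]) (simp_all add: fun_eq_iff all_idx)
  moreover have "bij tr23" by (rule o_bij[of tr23]) (simp_all add: fun_eq_iff all_idx)
  moreover have "bij cyc" by (rule o_bij[of cyc2]) (simp_all add: fun_eq_iff all_idx)
  moreover have "bij cyc2" by (rule o_bij[of cyc]) (simp_all add: fun_eq_iff all_idx)
  ultimately show "\<sigma> \<in> set S3_perms \<Longrightarrow> bij \<sigma>" by (auto simp: S3_perms_def)
qed

definition orbit_sum :: "((idx \<Rightarrow> idx) \<Rightarrow> 'a::comm_ring_1) \<Rightarrow> 'a" where
  "orbit_sum h = sum_list (map h S3_perms)"

lemma orbit_sum_cong: "(\<And>\<sigma>. \<sigma> \<in> set S3_perms \<Longrightarrow> h \<sigma> = g \<sigma>) \<Longrightarrow> orbit_sum h = orbit_sum g"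
  unfolding orbit_sum_def by (metis map_eq_conv)

lemma orbit_sum_add: "orbit_sum (\<lambda>\<sigma>. f \<sigma> + g \<sigma>) = orbit_sum f + orbit_sum g"
  by (simp add: orbit_sum_def sum_list_addf)

lemma orbit_sum_mult: "orbit_sum (\<lambda>\<sigma>. c * f \<sigma>) = c * orbit_sum f"
  by (simp add: orbit_sum_def sum_list_const_mult)

lemma orbit_sum_const: "orbit_sum (\<lambda>\<sigma>. c) = 6 * c"
  by (simp add: orbit_sum_def S3_perms_def algebra_simps)

text \<open>The orbit sum of a product of three column functions, expressed through sums over
  the columns (the case k = 3 of the formula for monomial symmetric functions).\<close>
lemma orbit_sum_product:
  "orbit_sum (\<lambda>\<sigma>. A (\<sigma> I1) * B (\<sigma> I2) * C (\<sigma> I3)) =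
     S3 B * S3 C * S3 A - S3 C * S3 (\<lambda>j. A j * B j) - S3 B * S3 (\<lambda>j. A j * C j)
     - S3 (\<lambda>j. B j * C j) * S3 A + 2 * S3 (\<lambda>j. A j * B j * C j)"
  by (simp add: orbit_sum_def S3_perms_def S3_def algebra_simps)

lemma orbit_sum_swap12:
  "orbit_sum (\<lambda>\<sigma>. A (\<sigma> I1) * B (\<sigma> I2) * C (\<sigma> I3)) =
   orbit_sum (\<lambda>\<sigma>. B (\<sigma> I1) * A (\<sigma> I2) * C (\<sigma> I3))"
  by (simp add: orbit_sum_def S3_perms_def ac_simps)

lemma orbit_sum_swap13:
  "orbit_sum (\<lambda>\<sigma>. A (\<sigma> I1) * B (\<sigma> I2) * C (\<sigma> I3)) =
   orbit_sum (\<lambda>\<sigma>. C (\<sigma> I1) * B (\<sigma> I2) * A (\<sigma> I3))"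
  by (simp add: orbit_sum_def S3_perms_def ac_simps)

text \<open>Six times the Reynolds operator (averaging over S_3).\<close>
definition reynolds :: "qpoly \<Rightarrow> qpoly" where
  "reynolds f = orbit_sum (\<lambda>\<sigma>. poly_perm \<sigma> f)"

lemma reynolds_sym: "f \<in> SymQ \<Longrightarrow> reynolds f = 6 * f"
  by (simp add: reynolds_def orbit_sum_cong[of _ "\<lambda>_. f"] SymQ_D bij_S3_perms orbit_sum_const)

lemma reynolds_add: "reynolds (f + g) = reynolds f + reynolds g"
  unfolding reynolds_def orbit_sum_add[symmetric]
  by (rule orbit_sum_cong) (simp add: poly_perm_add bij_S3_perms)

lemma reynolds_mult_sym: "s \<in> SymQ \<Longrightarrow> reynolds (s * f) = s * reynolds f"
  unfolding reynolds_def orbit_sum_mult[symmetric]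
  by (rule orbit_sum_cong) (simp add: poly_perm_mult SymQ_D bij_S3_perms)

lemma col_pj_mult: "col a b j * pj j * col a' b' j = col (a + a') (b + b') j * pj j"
  by (simp add: col_mult[symmetric] mult_ac)

lemma orbit_sum_weighted_in_J:
  "orbit_sum (\<lambda>\<sigma>. (col a b (\<sigma> I1) * pj (\<sigma> I1)) * col a' b' (\<sigma> I2) * col a'' b'' (\<sigma> I3)) \<in> J"
  unfolding orbit_sum_product[where A = "\<lambda>j. col a b j * pj j"]
  by (simp only: col_pj_mult col_mult F_def[symmetric] E_def[symmetric])
    (intro J_intros F_in_J)

text \<open>R maps a product of one column monomial per column times any p_j into J; for p_2 and
  p_3 one first moves the weighted factor to the first column.\<close>
lemma reynolds_col_in_J:
  "reynolds (col a1 b1 I1 * col a2 b2 I2 * col a3 b3 I3 * pj i) \<in> J"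
proof -
  have "reynolds (col a1 b1 I1 * col a2 b2 I2 * col a3 b3 I3 * pj i) =
    orbit_sum (\<lambda>\<sigma>. col a1 b1 (\<sigma> I1) * col a2 b2 (\<sigma> I2) * col a3 b3 (\<sigma> I3) * pj (\<sigma> i))"
    unfolding reynolds_def
    by (rule orbit_sum_cong) (simp add: bij_S3_perms poly_perm_mult poly_perm_col poly_perm_pj)
  also have "\<dots> \<in> J"
  proof (cases i)
    case I1
    then show ?thesis using orbit_sum_weighted_in_J[of a1 b1 a2 b2 a3 b3]
      by (simp add: mult_ac)
  next
    case I2
    then show ?thesis
      using orbit_sum_weighted_in_J[of a2 b2 a1 b1 a3 b3]
        orbit_sum_swap12[of "col a1 b1" "\<lambda>j. col a2 b2 j * pj j" "col a3 b3"]
      by (simp add: mult_ac)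
  next
    case I3
    then show ?thesis
      using orbit_sum_weighted_in_J[of a3 b3 a2 b2 a1 b1]
        orbit_sum_swap13[of "col a1 b1" "col a2 b2" "\<lambda>j. col a3 b3 j * pj j"]
      by (simp add: mult_ac)
  qed
  finally show ?thesis .
qed

lemma Var_power: "Var v ^ n = Poly_Mapping.single (Poly_Mapping.single v n) 1"
  by (induct n) (simp_all add: Var_def mult_single single_add[symmetric])

lemma col_single:
  "col a b j = Poly_Mapping.single (Poly_Mapping.single (X j) a + Poly_Mapping.single (D j) b) 1"
  by (simp add: col_def Var_power mult_single)

lemma monomial_decomp:
  fixes k :: "var \<Rightarrow>\<^sub>0 nat"
  defines "e \<equiv> Poly_Mapping.lookup k"
  shows "Poly_Mapping.single k 1 = Var Lv ^ e Lv *
    (col (e (X I1)) (e (D I1)) I1 * col (e (X I2)) (e (D I2)) I2 * col (e (X I3)) (e (D I3)) I3)"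
proof -
  have "k = Poly_Mapping.single Lv (e Lv)
     + ((Poly_Mapping.single (X I1) (e (X I1)) + Poly_Mapping.single (D I1) (e (D I1)))
      + (Poly_Mapping.single (X I2) (e (X I2)) + Poly_Mapping.single (D I2) (e (D I2)))
      + (Poly_Mapping.single (X I3) (e (X I3)) + Poly_Mapping.single (D I3) (e (D I3))))"
    (is "k = ?sum")
  proof (rule poly_mapping_eqI)
    fix v
    show "Poly_Mapping.lookup k v = Poly_Mapping.lookup ?sum v"
    proof (cases v)
      case (X j)
      then show ?thesis by (cases j) (simp_all add: e_def lookup_add lookup_single)
    next
      case (D j)
      then show ?thesis by (cases j) (simp_all add: e_def lookup_add lookup_single)
    qed (simp add: e_def lookup_add lookup_single)
  qed
  then show ?thesis by (simp add: Var_power col_single mult_single)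
qed

lemma reynolds_pj_in_J: "reynolds (c * pj i) \<in> J"
proof (induct c rule: poly_mapping_add_induct)
  case zero
  show ?case
    by (simp add: reynolds_sym subring_zero[OF subring_SymQ] ideal_gen_in_zero[OF subring_SymQ])
next
  case (plus f g)
  then show ?case by (simp add: distrib_right reynolds_add J_closed)
next
  case (single k v)
  let ?e = "Poly_Mapping.lookup k"
  have "Poly_Mapping.single k v * pj i = (Poly_Mapping.single 0 v * Var Lv ^ ?e Lv) *
      (col (?e (X I1)) (?e (D I1)) I1 * col (?e (X I2)) (?e (D I2)) I2 * col (?e (X I3)) (?e (D I3)) I3 * pj i)"
    using monomial_decomp[of k] mult_single[of 0 v k 1] by (simp add: mult_ac)
  then show ?case
    by (simp only: reynolds_mult_sym sym_closed sym_const sym_L)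
      (intro J_closed sym_closed sym_const sym_L reynolds_col_in_J)
qed

lemma pj_in_I_C: "pj j \<in> I_C"
  unfolding I_C_def by (cases j) (simp_all add: ideal_gen_in_gen[OF subring_UNIV])

lemma F_in_I_C: "F a b \<in> I_C"
  unfolding F_def S3_def I_C_def
  by (intro ideal_gen_in_add[OF subring_UNIV] ideal_gen_in_mult[OF subring_UNIV] UNIV_I
      pj_in_I_C[unfolded I_C_def])

lemma gens_in_I_C_sym: "set gens \<subseteq> I_C_sym"
  unfolding pts_F I_C_sym_def by (auto intro: F_in_I_C sym_F)

lemma J_subset_I_C_sym: "J \<subseteq> I_C_sym"
proof (rule ideal_gen_in_least)
  show "0 \<in> I_C_sym"
    unfolding I_C_sym_def I_C_def
    by (simp add: ideal_gen_in_zero subring_UNIV subring_zero[OF subring_SymQ])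
  show "a + b \<in> I_C_sym" if "a \<in> I_C_sym" "b \<in> I_C_sym" for a b
    using that unfolding I_C_sym_def I_C_def
    by (simp add: ideal_gen_in_add[OF subring_UNIV] subring_closed[OF subring_SymQ])
  show "s * a \<in> I_C_sym" if "s \<in> SymQ" "a \<in> I_C_sym" for s a
    using that unfolding I_C_sym_def I_C_def
    by (simp add: ideal_gen_in_mult[OF subring_UNIV] subring_closed[OF subring_SymQ])
qed (rule gens_in_I_C_sym)

text \<open>Hard inclusion: write f = c1 p1 + c2 p2 + c3 p3 and apply the Reynolds operator, which
  multiplies the symmetric f by 6 and maps each c_j p_j into J.\<close>
lemma I_C_sym_subset_J: "I_C_sym \<subseteq> J"
proof
  fix f assume "f \<in> I_C_sym"
  then have sym: "f \<in> SymQ" and "f \<in> I_C" unfolding I_C_sym_def by auto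
  then obtain c1 c2 c3 where f: "f = c1 * pj I1 + c2 * pj I2 + c3 * pj I3"
    unfolding I_C_def by (auto elim: ideal_gen_in_3E)
  have "6 * f = reynolds (c1 * pj I1) + reynolds (c2 * pj I2) + reynolds (c3 * pj I3)"
    using reynolds_sym[OF sym] unfolding f by (simp add: reynolds_add)
  also have "\<dots> \<in> J" by (intro J_closed reynolds_pj_in_J)
  finally show "f \<in> J" by (rule J_cancel_6)
qed

theorem theorem1p2:
  shows "(\<exists>gs. set gs \<subseteq> SymQ \<and> I_C_sym = ideal_gen_in SymQ gs)
       \<and> set [pt2, pt3, pt4, pt5, pt6, pt7, pt8] \<subseteq> I_C_sym
       \<and> I_C_sym = ideal_gen_in SymQ [pt2, pt3, pt4, pt5, pt6, pt7, pt8]"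
proof -
  have "I_C_sym = J" using J_subset_I_C_sym I_C_sym_subset_J by blast
  moreover have "set gens \<subseteq> SymQ" using gens_in_I_C_sym unfolding I_C_sym_def by blast
  ultimately show ?thesis using gens_in_I_C_sym by blast
qed

end
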